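(* Let $\hat W$ be a first degree iMPO in regular form with bond dimension $\chi$, and let $\hat V=\begin{pmatrix}\hat 1&\hat{\mathbf c}\\0&\hat{\mathsf A}\end{pmatrix}$ be its upper-left $(1+\chi)\times(1+\chi)$ block. Then $1$ is an eigenvalue of the transfer matrix $T_V$, every other eigenvalue $\lambda$ of $T_V$ satisfies $|\lambda|<1$, and there is a left eigenvector $X$ with $XT_V=X$ of the block form $$X=\begin{pmatrix}1&\mathbf x\\ \mathbf x^\dagger&\mathsf X\end{pmatrix},$$ where $\mathbf x$ is a row vector of length $\chi$ and $\mathsf X$ is a $\chi\times\chi$ matrix.
   Context: Fix the algebra $\mathcal A$ of operators on $\mathbb C^q$ with inner product $\langle\hat A,\hat B\rangle=\mathrm{Tr}[\hat A^\dagger\hat B]/\mathrm{Tr}[\hat 1]$ and an orthonormal basis $\{\hat O_\alpha\}_{0\le\alpha<q^2}$ with $\hat O_0=\hat 1$. For a matrix $\hat W$ with entries in $\mathcal A$ write $\hat W=\sum_\alpha\hat O_\alpha W_\alpha$ with complex matrices $(W_\alpha)_{ab}=\langle\hat O_\alpha,\hat W_{ab}\rangle$. For a square such $\hat W$, its transfer matrix $T_W=\sum_\alpha\overline{W_\alpha}\otimes W_\alpha$ acts on square complex matrices $X$ from the left by $XT_W=\sum_\alpha W_\alpha^\dagger XW_\alpha$; a left eigenvector means $XT_W=\lambda X$. An iMPO in regular form of bond dimension $\chi$ is a $(\chi+2)\times(\chi+2)$ matrix with entries in $\mathcal A$ (indices $0,1,\dots,\chi,\chi+1$) of block form $\hat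 W=\begin{pmatrix}\hat 1&\hat{\mathbf c}&\hat d\\0&\hat{\mathsf A}&\hat{\mathbf b}\\0&0&\hat 1\end{pmatrix}$ with block sizes $1,\chi,1$. It is called first degree if every eigenvalue of $T_A$, the transfer matrix of the $\chi\times\chi$ block $\hat{\mathsf A}$, has modulus strictly less than $1$. *)

theory Defs
  imports "Jordan_Normal_Form.Schur_Decomposition" "Jordan_Normal_Form.Char_Poly"
begin

definition mtrace :: "complex mat \<Rightarrow> complex" where
  "mtrace A = (\<Sum>i<dim_row A. A $$ (i, i))"

definition hs_inner :: "complex mat \<Rightarrow> complex mat \<Rightarrow> complex" where
  "hs_inner A B = mtrace (mat_adjoint A * B) / mtrace (1\<^sub>m (dim_row A))"

definition orthonormal_op_basis :: "nat \<Rightarrow> (nat \<Rightarrow> complex mat) \<Rightarrow> bool" where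
  "orthonormal_op_basis q B \<longleftrightarrow>
     (\<forall>\<alpha><q^2. B \<alpha> \<in> carrier_mat q q) \<and>
     (\<forall>\<alpha><q^2. \<forall>\<beta><q^2. hs_inner (B \<alpha>) (B \<beta>) = (if \<alpha> = \<beta> then 1 else 0)) \<and>
     B 0 = 1\<^sub>m q"

definition op_matrix :: "nat \<Rightarrow> complex mat mat \<Rightarrow> bool" where
  "op_matrix q W \<longleftrightarrow> (\<forall>a<dim_row W. \<forall>b<dim_col W. W $$ (a, b) \<in> carrier_mat q q)"

definition comp :: "(nat \<Rightarrow> complex mat) \<Rightarrow> complex mat mat \<Rightarrow> nat \<Rightarrow> complex mat" where
  "comp B W \<alpha> = mat (dim_row W) (dim_col W) (\<lambda>(a, b). hs_inner (B \<alpha>) (W $$ (a, b)))"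

definition kron :: "complex mat \<Rightarrow> complex mat \<Rightarrow> complex mat" where
  "kron A B = mat (dim_row A * dim_row B) (dim_col A * dim_col B)
     (\<lambda>(i, j). A $$ (i div dim_row B, j div dim_col B) * B $$ (i mod dim_row B, j mod dim_col B))"

definition transfer_mat :: "nat \<Rightarrow> (nat \<Rightarrow> complex mat) \<Rightarrow> complex mat mat \<Rightarrow> complex mat" where
  "transfer_mat q B W = mat (dim_row W * dim_row W) (dim_row W * dim_row W)
     (\<lambda>ij. \<Sum>\<alpha><q^2. kron (map_mat cnj (comp B W \<alpha>)) (comp B W \<alpha>) $$ ij)"

text \<open>Row-major vectorisation of a square matrix X, and row vector times matrix;
  so that  row_times (vec_of X) (transfer_mat q B W) = vec_of (sum_alpha W_alpha^dagger X W_alpha).\<close>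
definition vec_of :: "complex mat \<Rightarrow> complex vec" where
  "vec_of X = vec (dim_row X * dim_col X) (\<lambda>k. X $$ (k div dim_col X, k mod dim_col X))"

definition row_times :: "complex vec \<Rightarrow> complex mat \<Rightarrow> complex vec" where
  "row_times v T = vec (dim_col T) (\<lambda>j. \<Sum>i<dim_vec v. v $ i * T $$ (i, j))"

definition regular_form :: "nat \<Rightarrow> nat \<Rightarrow> complex mat mat \<Rightarrow> bool" where
  "regular_form q chi W \<longleftrightarrow>
     W \<in> carrier_mat (chi + 2) (chi + 2) \<and> op_matrix q W \<and>
     W $$ (0, 0) = 1\<^sub>m q \<and> W $$ (chi + 1, chi + 1) = 1\<^sub>m q \<and>
     (\<forall>i. 1 \<le> i \<and> i \<le> chi + 1 \<longrightarrow> W $$ (i, 0) = 0\<^sub>m q q) \<and>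
     (\<forall>j\<le>chi. W $$ (chi + 1, j) = 0\<^sub>m q q)"

definition blockA :: "nat \<Rightarrow> complex mat mat \<Rightarrow> complex mat mat" where
  "blockA chi W = mat chi chi (\<lambda>(i, j). W $$ (i + 1, j + 1))"

definition blockV :: "nat \<Rightarrow> complex mat mat \<Rightarrow> complex mat mat" where
  "blockV chi W = mat (chi + 1) (chi + 1) (\<lambda>(i, j). W $$ (i, j))"

definition first_degree :: "nat \<Rightarrow> (nat \<Rightarrow> complex mat) \<Rightarrow> nat \<Rightarrow> complex mat mat \<Rightarrow> bool" where
  "first_degree q B chi W \<longleftrightarrow> regular_form q chi W \<and>
     (\<forall>l. eigenvalue (transfer_mat q B (blockA chi W)) l \<longrightarrow> cmod l < 1)"

end

(* Write V_alpha = [[delta_alpha0, c_alpha], [0, A_alpha]] for the components of V.  Splitting the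
   index pairs (a, b) of T_V according to which of a, b vanish makes T_V block triangular with
   diagonal blocks 1, A_0, conj A_0 and T_A, so every eigenvalue of T_V other than 1 is an
   eigenvalue of T_A or of A_0 (possibly conjugated).  The eigenvalues of A_0 are controlled by
   T_A through positivity: if A_0 v = mu v, the iterates of v v^dagger under the completely
   positive map Y |-> sum_alpha A_alpha Y A_alpha^dagger have quadratic form at v at least
   |mu|^(2k) |v|^4, so |mu|^2 is at most the spectral radius of T_A, which is < 1.  Since 1 is then
   an eigenvalue of neither A_0 nor T_A, the equation X T_V = X with X_00 = 1 is solved block by
   block: the first row, the first column as its conjugate, and finally the lower block. *)

theory Submission
  imports Defs "Jordan_Normal_Form.Spectral_Radius"
begin

lemma sum_lessThan_mult_pairs:
  fixes f :: "nat \<Rightarrow> 'a::comm_monoid_add"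
  shows "(\<Sum>k<m * n. f k) = (\<Sum>a<m. \<Sum>b<n. f (a * n + b))"
proof (induction m)
  case (Suc m)
  have "(\<Sum>k<Suc m * n. f k) = (\<Sum>k<m * n. f k) + (\<Sum>k\<in>{m * n..<m * n + n}. f k)"
    by (simp add: sum.atLeastLessThan_concat[symmetric] lessThan_atLeast0 add.commute)
  also have "(\<Sum>k\<in>{m * n..<m * n + n}. f k) = (\<Sum>b<n. f (m * n + b))"
    using sum.shift_bounds_nat_ivl[of f 0 "m * n" n] by (simp add: lessThan_atLeast0 add.commute)
  finally show ?case using Suc by simp
qed simp

lemma sum_rotate3:
  "(\<Sum>a\<in>A. \<Sum>b\<in>B. \<Sum>c\<in>C. f a b c) = (\<Sum>c\<in>C. \<Sum>a\<in>A. \<Sum>b\<in>B. f a b c)"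
proof -
  have "(\<Sum>a\<in>A. \<Sum>b\<in>B. \<Sum>c\<in>C. f a b c) = (\<Sum>a\<in>A. \<Sum>c\<in>C. \<Sum>b\<in>B. f a b c)"
    by (rule sum.cong[OF refl], rule sum.swap)
  also have "\<dots> = (\<Sum>c\<in>C. \<Sum>a\<in>A. \<Sum>b\<in>B. f a b c)"
    by (rule sum.swap)
  finally show ?thesis .
qed

lemma sum_swap_pairs:
  "(\<Sum>a\<in>A. \<Sum>b\<in>B. \<Sum>c\<in>C. \<Sum>d\<in>D. f a b c d) = (\<Sum>c\<in>C. \<Sum>d\<in>D. \<Sum>a\<in>A. \<Sum>b\<in>B. f a b c d)"
proof -
  have "(\<Sum>a\<in>A. \<Sum>b\<in>B. \<Sum>c\<in>C. \<Sum>d\<in>D. f a b c d) = (\<Sum>a\<in>A. \<Sum>c\<in>C. \<Sum>b\<in>B. \<Sum>d\<in>D. f a b c d)"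
    by (rule sum.cong[OF refl], rule sum.swap)
  also have "\<dots> = (\<Sum>a\<in>A. \<Sum>c\<in>C. \<Sum>d\<in>D. \<Sum>b\<in>B. f a b c d)"
    by (intro sum.cong[OF refl], rule sum.swap)
  also have "\<dots> = (\<Sum>c\<in>C. \<Sum>a\<in>A. \<Sum>d\<in>D. \<Sum>b\<in>B. f a b c d)"
    by (rule sum.swap)
  also have "\<dots> = (\<Sum>c\<in>C. \<Sum>d\<in>D. \<Sum>a\<in>A. \<Sum>b\<in>B. f a b c d)"
    by (rule sum.cong[OF refl], rule sum.swap)
  finally show ?thesis .
qed

lemma sum_pairs_lessThan_Suc:
  fixes F :: "nat \<Rightarrow> nat \<Rightarrow> 'a::comm_monoid_add"
  shows "(\<Sum>c<Suc k. \<Sum>d<Suc k. F c d) = F 0 0 + (\<Sum>d<k. F 0 (Suc d)) + (\<Sum>c<k. F (Suc c) 0)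
    + (\<Sum>c<k. \<Sum>d<k. F (Suc c) (Suc d))"
  by (simp only: sum.lessThan_Suc_shift sum.distrib) (simp add: add_ac)

section \<open>Matrices flattened to vectors of pairs\<close>

lemma pair_index_less: "a < m \<Longrightarrow> b < m \<Longrightarrow> a * m + b < m * (m::nat)"
  using mult_le_mono1[of "Suc a" m m] by simp

lemma pair_index_div_mod:
  assumes "k < m * (m::nat)"
  shows "k div m < m" "k mod m < m"
  using assms by (simp_all add: less_mult_imp_div_less) (cases m; simp)

definition pair_vec :: "nat \<Rightarrow> (nat \<Rightarrow> nat \<Rightarrow> complex) \<Rightarrow> complex vec" where
  "pair_vec m Y = vec (m * m) (\<lambda>k. Y (k div m) (k mod m))"

lemma pair_vec_carrier [simp]: "pair_vec m Y \<in> carrier_vec (m * m)"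
  and dim_pair_vec [simp]: "dim_vec (pair_vec m Y) = m * m"
  by (simp_all add: pair_vec_def)

lemma index_pair_vec [simp]: "a < m \<Longrightarrow> b < m \<Longrightarrow> pair_vec m Y $ (a * m + b) = Y a b"
  using pair_index_less by (simp add: pair_vec_def)

lemma pair_vec_eq_iff: "pair_vec m Y = pair_vec m Z \<longleftrightarrow> (\<forall>a<m. \<forall>b<m. Y a b = Z a b)"
proof
  assume "pair_vec m Y = pair_vec m Z"
  then show "\<forall>a<m. \<forall>b<m. Y a b = Z a b"
    by (metis index_pair_vec)
next
  assume "\<forall>a<m. \<forall>b<m. Y a b = Z a b"
  then show "pair_vec m Y = pair_vec m Z"
    by (auto simp: pair_vec_def pair_index_div_mod intro!: eq_vecI)
qed

lemma pair_vec_index: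
  assumes "y \<in> carrier_vec (m * m)"
  shows "pair_vec m (\<lambda>a b. y $ (a * m + b)) = y"
proof (rule eq_vecI)
  fix k assume "k < dim_vec y"
  then have "k < m * m" using assms by simp
  then show "pair_vec m (\<lambda>a b. y $ (a * m + b)) $ k = y $ k"
    by (simp add: pair_vec_def)
qed (use assms in simp)

lemma zero_vec_eq_pair_vec: "0\<^sub>v (m * m) = pair_vec m (\<lambda>_ _. 0)"
  by (auto simp: pair_vec_def)

lemma smult_pair_vec: "l \<cdot>\<^sub>v pair_vec m Y = pair_vec m (\<lambda>a b. l * Y a b)"
  by (auto simp: pair_vec_def)

lemma vec_of_eq_pair_vec: "X \<in> carrier_mat m m \<Longrightarrow> vec_of X = pair_vec m (\<lambda>a b. X $$ (a, b))"
  by (simp add: vec_of_def pair_vec_def)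

lemma eigenvalue_iff_index:
  assumes A: "A \<in> carrier_mat m m"
  shows "eigenvalue A l \<longleftrightarrow> (\<exists>v. (\<exists>i<m. v i \<noteq> 0) \<and> (\<forall>i<m. (\<Sum>j<m. A $$ (i, j) * v j) = l * v i))"
proof
  assume "eigenvalue A l"
  then obtain v where v: "v \<in> carrier_vec m" "v \<noteq> 0\<^sub>v m" "A *\<^sub>v v = l \<cdot>\<^sub>v v"
    using A by (auto simp: eigenvalue_def eigenvector_def)
  have "\<exists>i<m. v $ i \<noteq> 0"
  proof (rule ccontr)
    assume "\<not> (\<exists>i<m. v $ i \<noteq> 0)"
    then have "v = 0\<^sub>v m"
      using v(1) by (intro eq_vecI) auto
    with v(2) show False ..
  qed
  moreover have "(\<Sum>j<m. A $$ (i, j) * v $ j) = l * v $ i" if "i < m" for i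
    using arg_cong[OF v(3), of "\<lambda>w. w $ i"] that A v(1)
    by (simp add: scalar_prod_def lessThan_atLeast0)
  ultimately show "\<exists>v. (\<exists>i<m. v i \<noteq> 0) \<and> (\<forall>i<m. (\<Sum>j<m. A $$ (i, j) * v j) = l * v i)"
    by blast
next
  assume "\<exists>v. (\<exists>i<m. v i \<noteq> 0) \<and> (\<forall>i<m. (\<Sum>j<m. A $$ (i, j) * v j) = l * v i)"
  then obtain v i0 where i0: "i0 < m" "v i0 \<noteq> 0"
    and v: "\<forall>i<m. (\<Sum>j<m. A $$ (i, j) * v j) = l * v i"
    by blast
  have "vec m v \<noteq> 0\<^sub>v m"
  proof
    assume "vec m v = 0\<^sub>v m"
    then have "vec m v $ i0 = 0\<^sub>v m $ i0" by simp
    with i0 show False by simp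
  qed
  moreover have "A *\<^sub>v vec m v = l \<cdot>\<^sub>v vec m v"
  proof (rule eq_vecI)
    fix i assume "i < dim_vec (l \<cdot>\<^sub>v vec m v)"
    then have "i < m" by simp
    then show "(A *\<^sub>v vec m v) $ i = (l \<cdot>\<^sub>v vec m v) $ i"
      using A v by (simp add: scalar_prod_def lessThan_atLeast0)
  qed (use A in simp)
  ultimately show "eigenvalue A l"
    using A unfolding eigenvalue_def eigenvector_def by (metis carrier_matD(1) vec_carrier)
qed

section \<open>Transfer matrices of a family of components\<close>

definition transfer_kernel ::
  "nat \<Rightarrow> (nat \<Rightarrow> complex mat) \<Rightarrow> nat \<Rightarrow> nat \<Rightarrow> nat \<Rightarrow> nat \<Rightarrow> complex" where
  "transfer_kernel N M a b c d = (\<Sum>\<alpha><N. cnj (M \<alpha> $$ (a, c)) * M \<alpha> $$ (b, d))"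

definition component_transfer :: "nat \<Rightarrow> (nat \<Rightarrow> complex mat) \<Rightarrow> nat \<Rightarrow> complex mat" where
  "component_transfer N M m = mat (m * m) (m * m)
     (\<lambda>(i, j). transfer_kernel N M (i div m) (i mod m) (j div m) (j mod m))"

definition transfer_apply ::
  "nat \<Rightarrow> (nat \<Rightarrow> complex mat) \<Rightarrow> nat \<Rightarrow> (nat \<Rightarrow> nat \<Rightarrow> complex) \<Rightarrow> nat \<Rightarrow> nat \<Rightarrow> complex" where
  "transfer_apply N M m Y a b = (\<Sum>c<m. \<Sum>d<m. transfer_kernel N M a b c d * Y c d)"

lemma component_transfer_carrier [simp]: "component_transfer N M m \<in> carrier_mat (m * m) (m * m)"
  and dim_row_component_transfer [simp]: "dim_row (component_transfer N M m) = m * m"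
  and dim_col_component_transfer [simp]: "dim_col (component_transfer N M m) = m * m"
  by (simp_all add: component_transfer_def)

lemma index_component_transfer:
  "a < m \<Longrightarrow> b < m \<Longrightarrow> c < m \<Longrightarrow> d < m \<Longrightarrow>
    component_transfer N M m $$ (a * m + b, c * m + d) = transfer_kernel N M a b c d"
  using pair_index_less by (simp add: component_transfer_def)

lemma transfer_mat_eq_component_transfer:
  assumes "W \<in> carrier_mat m m"
  shows "transfer_mat q B W = component_transfer (q\<^sup>2) (comp B W) m"
proof (rule eq_matI)
  fix i j assume "i < dim_row (component_transfer (q\<^sup>2) (comp B W) m)"
    and "j < dim_col (component_transfer (q\<^sup>2) (comp B W) m)"
  then have "i < m * m" "j < m * m" by simp_all
  with pair_index_div_mod
  show "transfer_mat q B W $$ (i, j) = component_transfer (q\<^sup>2) (comp B W) m $$ (i, j)"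
    using assms
    by (simp add: transfer_mat_def component_transfer_def transfer_kernel_def kron_def comp_def)
qed (use assms in \<open>simp_all add: transfer_mat_def\<close>)

lemma component_transfer_mult_pair_vec:
  "component_transfer N M m *\<^sub>v pair_vec m Y = pair_vec m (transfer_apply N M m Y)"
proof -
  have "(component_transfer N M m *\<^sub>v pair_vec m Y) $ (a * m + b) = transfer_apply N M m Y a b"
    if "a < m" "b < m" for a b
  proof -
    have "(component_transfer N M m *\<^sub>v pair_vec m Y) $ (a * m + b) =
        (\<Sum>k<m * m. component_transfer N M m $$ (a * m + b, k) * pair_vec m Y $ k)"
      using pair_index_less[OF that] by (simp add: scalar_prod_def lessThan_atLeast0)
    then show ?thesis
      using that by (simp add: sum_lessThan_mult_pairs index_component_transfer transfer_apply_def)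
  qed
  then have "pair_vec m (\<lambda>a b. (component_transfer N M m *\<^sub>v pair_vec m Y) $ (a * m + b)) =
      pair_vec m (transfer_apply N M m Y)"
    unfolding pair_vec_eq_iff by simp
  moreover have "component_transfer N M m *\<^sub>v pair_vec m Y \<in> carrier_vec (m * m)"
    using mult_mat_vec_carrier[OF component_transfer_carrier pair_vec_carrier] .
  ultimately show ?thesis
    by (simp only: pair_vec_index)
qed

lemma row_times_pair_vec_component_transfer:
  "row_times (pair_vec m Y) (component_transfer N M m) =
    pair_vec m (\<lambda>c d. \<Sum>a<m. \<Sum>b<m. Y a b * transfer_kernel N M a b c d)"
proof -
  have "row_times (pair_vec m Y) (component_transfer N M m) $ (c * m + d) =
      (\<Sum>a<m. \<Sum>b<m. Y a b * transfer_kernel N M a b c d)" if "c < m" "d < m" for c d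
    using that pair_index_less[OF that]
    by (simp add: row_times_def sum_lessThan_mult_pairs index_component_transfer)
  then have "pair_vec m (\<lambda>c d. row_times (pair_vec m Y) (component_transfer N M m) $ (c * m + d)) =
      pair_vec m (\<lambda>c d. \<Sum>a<m. \<Sum>b<m. Y a b * transfer_kernel N M a b c d)"
    unfolding pair_vec_eq_iff by simp
  moreover have "row_times (pair_vec m Y) (component_transfer N M m) \<in> carrier_vec (m * m)"
    by (simp add: row_times_def)
  ultimately show ?thesis
    by (simp only: pair_vec_index)
qed

lemma eigenvalue_component_transfer_iff:
  "eigenvalue (component_transfer N M m) l \<longleftrightarrow>
    (\<exists>Y. (\<exists>a<m. \<exists>b<m. Y a b \<noteq> 0) \<and>
      (\<forall>a<m. \<forall>b<m. transfer_apply N M m Y a b = l * Y a b))"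
proof
  assume "eigenvalue (component_transfer N M m) l"
  then obtain y where y: "y \<in> carrier_vec (m * m)" "y \<noteq> 0\<^sub>v (m * m)"
    "component_transfer N M m *\<^sub>v y = l \<cdot>\<^sub>v y"
    by (auto simp: eigenvalue_def eigenvector_def)
  define Y where "Y a b = y $ (a * m + b)" for a b
  have y_eq: "y = pair_vec m Y"
    unfolding Y_def using pair_vec_index[OF y(1)] by simp
  show "\<exists>Y. (\<exists>a<m. \<exists>b<m. Y a b \<noteq> 0) \<and>
      (\<forall>a<m. \<forall>b<m. transfer_apply N M m Y a b = l * Y a b)"
    using y(2,3) unfolding y_eq component_transfer_mult_pair_vec smult_pair_vec
      zero_vec_eq_pair_vec pair_vec_eq_iff by blast
next
  assume "\<exists>Y. (\<exists>a<m. \<exists>b<m. Y a b \<noteq> 0) \<and>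
      (\<forall>a<m. \<forall>b<m. transfer_apply N M m Y a b = l * Y a b)"
  then obtain Y where Y: "\<exists>a<m. \<exists>b<m. Y a b \<noteq> 0"
    "\<forall>a<m. \<forall>b<m. transfer_apply N M m Y a b = l * Y a b"
    by blast
  have "pair_vec m Y \<noteq> 0\<^sub>v (m * m)"
    unfolding zero_vec_eq_pair_vec pair_vec_eq_iff using Y(1) by blast
  moreover have "component_transfer N M m *\<^sub>v pair_vec m Y = l \<cdot>\<^sub>v pair_vec m Y"
    unfolding component_transfer_mult_pair_vec smult_pair_vec pair_vec_eq_iff using Y(2) by blast
  ultimately show "eigenvalue (component_transfer N M m) l"
    unfolding eigenvalue_def eigenvector_def by (metis dim_row_component_transfer pair_vec_carrier)
qed

lemma component_transfer_pow_mult_pair_vec: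
  "component_transfer N M m ^\<^sub>m k *\<^sub>v pair_vec m Y = pair_vec m ((transfer_apply N M m ^^ k) Y)"
proof (induction k arbitrary: Y)
  case 0
  then show ?case by simp
next
  case (Suc k)
  have "component_transfer N M m ^\<^sub>m Suc k *\<^sub>v pair_vec m Y =
      component_transfer N M m ^\<^sub>m k *\<^sub>v (component_transfer N M m *\<^sub>v pair_vec m Y)"
    unfolding pow_mat.simps(2)
    using assoc_mult_mat_vec[OF pow_carrier_mat component_transfer_carrier pair_vec_carrier]
    by (simp del: assoc_mult_mat_vec)
  then show ?case
    by (simp add: Suc component_transfer_mult_pair_vec funpow_Suc_right del: funpow.simps)
qed

section \<open>Eigenvalues of the identity component\<close>

definition pair_form :: "nat \<Rightarrow> (nat \<Rightarrow> nat \<Rightarrow> complex) \<Rightarrow> (nat \<Rightarrow> complex) \<Rightarrow> complex" where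
  "pair_form m Y x = (\<Sum>a<m. \<Sum>b<m. x a * Y a b * cnj (x b))"

lemma pair_form_transfer_apply:
  "pair_form m (transfer_apply N M m Y) x =
    (\<Sum>\<alpha><N. pair_form m Y (\<lambda>c. \<Sum>a<m. x a * cnj (M \<alpha> $$ (a, c))))"
proof -
  define F where "F a b c d \<alpha> = x a * cnj (M \<alpha> $$ (a, c)) * Y c d * (cnj (x b) * M \<alpha> $$ (b, d))"
    for a b c d \<alpha>
  have "pair_form m (transfer_apply N M m Y) x = (\<Sum>a<m. \<Sum>b<m. \<Sum>c<m. \<Sum>d<m. \<Sum>\<alpha><N. F a b c d \<alpha>)"
    by (simp add: pair_form_def transfer_apply_def transfer_kernel_def F_def
        sum_distrib_left sum_distrib_right mult_ac)
  also have "\<dots> = (\<Sum>a<m. \<Sum>b<m. \<Sum>\<alpha><N. \<Sum>c<m. \<Sum>d<m. F a b c d \<alpha>)"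
    by (intro sum.cong[OF refl]) (rule sum_rotate3)
  also have "\<dots> = (\<Sum>\<alpha><N. \<Sum>a<m. \<Sum>b<m. \<Sum>c<m. \<Sum>d<m. F a b c d \<alpha>)"
    by (rule sum_rotate3)
  also have "\<dots> = (\<Sum>\<alpha><N. \<Sum>c<m. \<Sum>d<m. \<Sum>a<m. \<Sum>b<m. F a b c d \<alpha>)"
    by (rule sum.cong[OF refl], rule sum_swap_pairs)
  also have "\<dots> = (\<Sum>\<alpha><N. pair_form m Y (\<lambda>c. \<Sum>a<m. x a * cnj (M \<alpha> $$ (a, c))))"
    by (simp add: pair_form_def F_def sum_distrib_left sum_distrib_right mult_ac)
  finally show ?thesis .
qed

(* transfer_apply conjugates the completely positive map Y |-> sum_alpha M_alpha Y M_alpha^dagger;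
   the lower bound keeps only the alpha = 0 term, the others being nonnegative by induction. *)
lemma pair_form_transfer_iterate_ge:
  assumes N: "0 < N"
    and v: "\<forall>i<m. (\<Sum>j<m. M 0 $$ (i, j) * v j) = \<mu> * v i"
  shows "complex_of_real ((cmod \<mu>) ^ (2 * k) * (cmod (\<Sum>a<m. x a * cnj (v a)))\<^sup>2)
    \<le> pair_form m ((transfer_apply N M m ^^ k) (\<lambda>a b. cnj (v a) * v b)) x"
proof (induction k arbitrary: x)
  case 0
  let ?s = "\<Sum>a<m. x a * cnj (v a)"
  have "pair_form m (\<lambda>a b. cnj (v a) * v b) x = ?s * cnj ?s"
    by (simp add: pair_form_def sum_distrib_left sum_distrib_right mult_ac)
  also have "\<dots> = complex_of_real ((cmod ?s)\<^sup>2)"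
    by (rule complex_norm_square[symmetric])
  finally show ?case
    by simp
next
  case (Suc k)
  let ?Y = "(transfer_apply N M m ^^ k) (\<lambda>a b. cnj (v a) * v b)"
  define u where "u \<alpha> = (\<lambda>c. \<Sum>a<m. x a * cnj (M \<alpha> $$ (a, c)))" for \<alpha>
  have "(\<Sum>c<m. u 0 c * cnj (v c)) = (\<Sum>c<m. \<Sum>a<m. x a * cnj (M 0 $$ (a, c) * v c))"
    by (simp add: u_def sum_distrib_right mult.assoc)
  also have "\<dots> = (\<Sum>a<m. x a * cnj (\<Sum>c<m. M 0 $$ (a, c) * v c))"
    by (subst sum.swap) (simp add: sum_distrib_left)
  also have "\<dots> = cnj \<mu> * (\<Sum>a<m. x a * cnj (v a))"
    using v by (simp add: sum_distrib_left mult.left_commute)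
  finally have u0: "(\<Sum>c<m. u 0 c * cnj (v c)) = cnj \<mu> * (\<Sum>a<m. x a * cnj (v a))" .
  have "complex_of_real ((cmod \<mu>) ^ (2 * Suc k) * (cmod (\<Sum>a<m. x a * cnj (v a)))\<^sup>2) =
      complex_of_real ((cmod \<mu>) ^ (2 * k) * (cmod (\<Sum>c<m. u 0 c * cnj (v c)))\<^sup>2)"
    by (simp add: u0 norm_mult power_mult_distrib power_add power2_eq_square)
  also have "\<dots> \<le> pair_form m ?Y (u 0)"
    by (rule Suc.IH)
  also have "\<dots> \<le> (\<Sum>\<alpha><N. pair_form m ?Y (u \<alpha>))"
  proof (rule member_le_sum)
    fix \<alpha>
    have "0 \<le> complex_of_real ((cmod \<mu>) ^ (2 * k) * (cmod (\<Sum>c<m. u \<alpha> c * cnj (v c)))\<^sup>2)"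
      unfolding less_eq_complex_def by simp
    then show "0 \<le> pair_form m ?Y (u \<alpha>)"
      using Suc.IH order_trans by blast
  qed (use N in auto)
  also have "\<dots> = pair_form m ((transfer_apply N M m ^^ Suc k) (\<lambda>a b. cnj (v a) * v b)) x"
    by (simp add: pair_form_transfer_apply u_def)
  finally show ?case .
qed

lemma norm_mult_mat_vec_le:
  fixes A :: "complex mat"
  assumes "norm_bound A C" and "A \<in> carrier_mat n n'" and "y \<in> carrier_vec n'" and "i < n"
  shows "cmod ((A *\<^sub>v y) $ i) \<le> C * (\<Sum>j<n'. cmod (y $ j))"
proof -
  have "cmod ((A *\<^sub>v y) $ i) = cmod (\<Sum>j<n'. A $$ (i, j) * y $ j)"
    using assms(2-4) by (simp add: scalar_prod_def lessThan_atLeast0)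
  also have "\<dots> \<le> (\<Sum>j<n'. cmod (A $$ (i, j)) * cmod (y $ j))"
    by (rule order_trans[OF norm_sum]) (simp add: norm_mult)
  also have "\<dots> \<le> (\<Sum>j<n'. C * cmod (y $ j))"
    using assms(1,2,4) by (intro sum_mono mult_right_mono) (auto simp: norm_bound_def)
  finally show ?thesis
    by (simp add: sum_distrib_left)
qed

lemma pair_form_transfer_iterate_le:
  assumes bounded: "\<And>k. norm_bound (component_transfer N M m ^\<^sub>m k) C"
  shows "cmod (pair_form m ((transfer_apply N M m ^^ k) Y) x)
    \<le> C * (\<Sum>j<m * m. cmod (pair_vec m Y $ j)) * (\<Sum>a<m. cmod (x a))\<^sup>2"
proof -
  define K where "K = C * (\<Sum>j<m * m. cmod (pair_vec m Y $ j))"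
  have entry: "cmod ((transfer_apply N M m ^^ k) Y a b) \<le> K" if "a < m" "b < m" for a b
  proof -
    have "(transfer_apply N M m ^^ k) Y a b =
        (component_transfer N M m ^\<^sub>m k *\<^sub>v pair_vec m Y) $ (a * m + b)"
      using that by (simp add: component_transfer_pow_mult_pair_vec)
    then show ?thesis
      unfolding K_def
      using norm_mult_mat_vec_le[OF bounded pow_carrier_mat[OF component_transfer_carrier]
          pair_vec_carrier pair_index_less[OF that]]
      by (simp only:)
  qed
  have "cmod (pair_form m ((transfer_apply N M m ^^ k) Y) x) \<le>
      (\<Sum>a<m. \<Sum>b<m. cmod (x a) * K * cmod (x b))"
    unfolding pair_form_def
    by (intro order_trans[OF norm_sum] sum_mono order_trans[OF norm_sum])
      (simp add: norm_mult entry mult_right_mono mult_left_mono)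
  also have "\<dots> = K * (\<Sum>a<m. cmod (x a))\<^sup>2"
    by (simp add: power2_eq_square sum_distrib_left sum_distrib_right mult_ac)
  finally show ?thesis
    by (simp add: K_def)
qed

lemma component_eigenvalue_le_1_if_bounded_powers:
  assumes bounded: "\<And>k. norm_bound (component_transfer N M m ^\<^sub>m k) C"
    and N: "0 < N" and M0: "M 0 \<in> carrier_mat m m" and eig: "eigenvalue (M 0) \<mu>"
  shows "cmod \<mu> \<le> 1"
proof (rule ccontr)
  assume "\<not> cmod \<mu> \<le> 1"
  then have \<mu>: "1 < (cmod \<mu>)\<^sup>2"
    by (simp add: one_less_power)
  obtain v where v_nz: "\<exists>i<m. v i \<noteq> 0" and v: "\<forall>i<m. (\<Sum>j<m. M 0 $$ (i, j) * v j) = \<mu> * v i"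
    using eig eigenvalue_iff_index[OF M0] by blast
  define Y where "Y = (\<lambda>a b. cnj (v a) * v b)"
  define S where "S = (\<Sum>a<m. (cmod (v a))\<^sup>2)"
  define D where "D = C * (\<Sum>j<m * m. cmod (pair_vec m Y $ j)) * (\<Sum>a<m. cmod (v a))\<^sup>2"
  have S: "0 < S"
  proof -
    from v_nz obtain i where "i < m" "v i \<noteq> 0"
      by blast
    then show ?thesis
      unfolding S_def by (intro sum_pos2[of _ i]) auto
  qed
  have v_v: "(\<Sum>a<m. v a * cnj (v a)) = complex_of_real S"
    unfolding S_def of_real_sum by (intro sum.cong refl) (rule complex_norm_square[symmetric])
  have bound: "(cmod \<mu>)\<^sup>2 ^ k * S\<^sup>2 \<le> D" for k
  proof -
    have "complex_of_real ((cmod \<mu>)\<^sup>2 ^ k * S\<^sup>2) \<le> pair_form m ((transfer_apply N M m ^^ k) Y) v"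
      using pair_form_transfer_iterate_ge[where M = M and m = m and v = v and \<mu> = \<mu> and k = k
          and x = v, OF N v] v_v S
      by (simp add: Y_def power_mult)
    then have "(cmod \<mu>)\<^sup>2 ^ k * S\<^sup>2 \<le> cmod (pair_form m ((transfer_apply N M m ^^ k) Y) v)"
      by (metis Re_complex_of_real complex_Re_le_cmod less_eq_complex_def order_trans)
    also have "\<dots> \<le> D"
      unfolding D_def by (rule pair_form_transfer_iterate_le[OF bounded])
    finally show ?thesis .
  qed
  obtain k where "D / S\<^sup>2 < (cmod \<mu>)\<^sup>2 ^ k"
    using real_arch_pow[OF \<mu>] by blast
  then have "D < (cmod \<mu>)\<^sup>2 ^ k * S\<^sup>2"
    using S by (simp add: divide_less_eq)
  with bound[of k] show False
    by simp
qed

lemma eigenvalue_smult_mat: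
  assumes A: "A \<in> carrier_mat n n" and eig: "eigenvalue A l"
  shows "eigenvalue (c \<cdot>\<^sub>m A) (c * l)"
proof -
  obtain v where "\<exists>i<n. v i \<noteq> 0" and v: "\<forall>i<n. (\<Sum>j<n. A $$ (i, j) * v j) = l * v i"
    using eig eigenvalue_iff_index[OF A] by blast
  moreover have "(\<Sum>j<n. (c \<cdot>\<^sub>m A) $$ (i, j) * v j) = c * l * v i" if "i < n" for i
    using A v that by (simp add: sum_distrib_left[symmetric] mult.assoc)
  ultimately show ?thesis
    using A by (subst eigenvalue_iff_index[of _ n]) auto
qed

lemma transfer_kernel_smult:
  assumes "\<And>\<alpha>. \<alpha> < N \<Longrightarrow> M \<alpha> \<in> carrier_mat m m" and "a < m" "b < m" "c < m" "d < m"
  shows "transfer_kernel N (\<lambda>\<alpha>. r \<cdot>\<^sub>m M \<alpha>) a b c d = cnj r * r * transfer_kernel N M a b c d"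
  unfolding transfer_kernel_def sum_distrib_left
proof (rule sum.cong[OF refl])
  fix \<alpha> assume "\<alpha> \<in> {..<N}"
  then have "M \<alpha> \<in> carrier_mat m m"
    using assms(1) by simp
  then show "cnj ((r \<cdot>\<^sub>m M \<alpha>) $$ (a, c)) * (r \<cdot>\<^sub>m M \<alpha>) $$ (b, d) =
      cnj r * r * (cnj (M \<alpha> $$ (a, c)) * M \<alpha> $$ (b, d))"
    using assms(2-5) by (simp add: mult_ac)
qed

lemma spectral_radius_component_transfer_scaled:
  assumes M: "\<And>\<alpha>. \<alpha> < N \<Longrightarrow> M \<alpha> \<in> carrier_mat m m" and s: "0 < s" and m: "0 < m"
  shows "spectral_radius (component_transfer N (\<lambda>\<alpha>. complex_of_real (sqrt s) \<cdot>\<^sub>m M \<alpha>) m)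
    \<le> s * spectral_radius (component_transfer N M m)"
proof -
  let ?M' = "\<lambda>\<alpha>. complex_of_real (sqrt s) \<cdot>\<^sub>m M \<alpha>"
  have "0 < m * m"
    using m by simp
  note radius = spectral_radius_mem_max[OF component_transfer_carrier this]
  have scaled: "transfer_apply N ?M' m Y a b = s * transfer_apply N M m Y a b"
    if "a < m" "b < m" for Y a b
  proof -
    have "cnj (complex_of_real (sqrt s)) * complex_of_real (sqrt s) = complex_of_real s"
      using s by (simp flip: of_real_mult)
    then have "transfer_kernel N ?M' a b c d = s * transfer_kernel N M a b c d"
      if "c < m" "d < m" for c d
      using transfer_kernel_smult[where N = N and M = M and r = "complex_of_real (sqrt s)",
          OF M \<open>a < m\<close> \<open>b < m\<close> that]
      by simp
    then show ?thesis
      by (simp add: transfer_apply_def sum_distrib_left mult.assoc)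
  qed
  obtain l where l: "eigenvalue (component_transfer N ?M' m) l"
    and radius_l: "spectral_radius (component_transfer N ?M' m) = cmod l"
    using radius(1)[of N ?M'] by (auto simp: spectrum_def)
  from l obtain Y where Y: "\<exists>a<m. \<exists>b<m. Y a b \<noteq> 0"
    "\<forall>a<m. \<forall>b<m. transfer_apply N ?M' m Y a b = l * Y a b"
    unfolding eigenvalue_component_transfer_iff by blast
  have "\<forall>a<m. \<forall>b<m. transfer_apply N M m Y a b = l / s * Y a b"
    using Y(2) s by (simp add: scaled field_simps)
  with Y(1) have "eigenvalue (component_transfer N M m) (l / s)"
    unfolding eigenvalue_component_transfer_iff by blast
  then have "cmod (l / s) \<le> spectral_radius (component_transfer N M m)"
    using radius(2) unfolding spectrum_def by auto
  then show ?thesis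
    using s radius_l by (simp add: norm_divide field_simps)
qed

lemma component_eigenvalue_sq_le_spectral_radius:
  assumes N: "0 < N" and M: "\<And>\<alpha>. \<alpha> < N \<Longrightarrow> M \<alpha> \<in> carrier_mat m m"
    and eig: "eigenvalue (M 0) \<mu>"
  shows "(cmod \<mu>)\<^sup>2 \<le> spectral_radius (component_transfer N M m)"
proof (rule ccontr)
  define \<rho> where "\<rho> = spectral_radius (component_transfer N M m)"
  assume "\<not> (cmod \<mu>)\<^sup>2 \<le> spectral_radius (component_transfer N M m)"
  then have less: "\<rho> < (cmod \<mu>)\<^sup>2"
    by (simp add: \<rho>_def)
  have m: "0 < m"
    using eigenvalue_imp_nonzero_dim[OF M[OF N] eig] .
  then have "0 \<le> \<rho>"
    using spectral_radius_mem_max(1)[OF component_transfer_carrier[of N M m]]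
    unfolding \<rho>_def by auto
  (* Scaling the components by sqrt s, with 1 / |mu|^2 < s < 1 / rho, makes the powers of the
     transfer matrix bounded while the scaled eigenvalue of M 0 still exceeds 1 in modulus. *)
  define s where "s = 2 / (\<rho> + (cmod \<mu>)\<^sup>2)"
  have s: "0 < s" "s * \<rho> < 1" "1 < s * (cmod \<mu>)\<^sup>2"
    using \<open>0 \<le> \<rho>\<close> less by (auto simp: s_def field_simps)
  define M' where "M' = (\<lambda>\<alpha>. complex_of_real (sqrt s) \<cdot>\<^sub>m M \<alpha>)"
  have "spectral_radius (component_transfer N M' m) < 1"
    using spectral_radius_component_transfer_scaled[where N = N and M = M, OF M s(1) m] s(2)
    unfolding M'_def \<rho>_def by linarith
  then obtain C where "\<And>k. norm_bound (component_transfer N M' m ^\<^sub>m k) C"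
    using spectral_radius_jnf_norm_bound_less_1_upper_triangular[OF component_transfer_carrier]
    by blast
  moreover have "M' 0 \<in> carrier_mat m m"
    using M[OF N] by (simp add: M'_def)
  moreover have "eigenvalue (M' 0) (complex_of_real (sqrt s) * \<mu>)"
    unfolding M'_def by (rule eigenvalue_smult_mat[OF M[OF N] eig])
  ultimately have "cmod (complex_of_real (sqrt s) * \<mu>) \<le> 1"
    using component_eigenvalue_le_1_if_bounded_powers N by blast
  then have "(sqrt s * cmod \<mu>)\<^sup>2 \<le> 1"
    using s(1) by (simp add: norm_mult abs_le_square_iff power_le_one)
  then have "s * (cmod \<mu>)\<^sup>2 \<le> 1"
    using s(1) by (simp add: power_mult_distrib)
  with s(3) show False
    by simp
qed

lemma component_eigenvalue_less_1:
  assumes N: "0 < N" and M: "\<And>\<alpha>. \<alpha> < N \<Longrightarrow> M \<alpha> \<in> carrier_mat m m"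
    and small: "\<And>l. eigenvalue (component_transfer N M m) l \<Longrightarrow> cmod l < 1"
    and eig: "eigenvalue (M 0) \<mu>"
  shows "cmod \<mu> < 1"
proof -
  have "0 < m * m"
    using eigenvalue_imp_nonzero_dim[OF M[OF N] eig] by simp
  then obtain l where "eigenvalue (component_transfer N M m) l"
    and "spectral_radius (component_transfer N M m) = cmod l"
    using spectral_radius_mem_max(1)[OF component_transfer_carrier[of N M m]]
    by (auto simp: spectrum_def)
  with component_eigenvalue_sq_le_spectral_radius[where N = N and M = M and m = m, OF N M eig] small
  have "(cmod \<mu>)\<^sup>2 < 1"
    by fastforce
  then show ?thesis
    by (simp add: power_less_one_iff abs_square_less_1)
qed

section \<open>Fixed points when 1 is not an eigenvalue\<close>

lemma smult_mat_mult_vec: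
  assumes "A \<in> carrier_mat n k" and "v \<in> carrier_vec k"
  shows "(a \<cdot>\<^sub>m A) *\<^sub>v v = a \<cdot>\<^sub>v (A *\<^sub>v v)"
  using assms by (intro eq_vecI) (auto simp: scalar_prod_def sum_distrib_left mult.assoc)

lemma solvable_if_det_nonzero:
  fixes C :: "'a::field mat"
  assumes C: "C \<in> carrier_mat n n" and det: "det C \<noteq> 0" and b: "b \<in> carrier_vec n"
  shows "\<exists>y \<in> carrier_vec n. C *\<^sub>v y = b"
proof
  define y where "y = (1 / det C) \<cdot>\<^sub>v (adj_mat C *\<^sub>v b)"
  have adj: "adj_mat C \<in> carrier_mat n n"
    using adj_mat(1)[OF C] .
  show "y \<in> carrier_vec n"
    using adj b by (simp add: y_def)
  have "C *\<^sub>v y = (1 / det C) \<cdot>\<^sub>v ((C * adj_mat C) *\<^sub>v b)"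
    using C adj b by (simp add: y_def mult_mat_vec)
  also have "\<dots> = b"
    using det b
    by (simp add: adj_mat(2)[OF C] smult_mat_mult_vec[OF one_carrier_mat b] smult_smult_assoc)
  finally show "C *\<^sub>v y = b" .
qed

lemma exists_row_fixed_point:
  fixes A :: "complex mat"
  assumes A: "A \<in> carrier_mat n n" and no1: "\<not> eigenvalue A 1"
  shows "\<exists>x. \<forall>j<n. x j = c j + (\<Sum>i<n. x i * A $$ (i, j))"
proof -
  have At: "A\<^sup>T \<in> carrier_mat n n"
    using A by simp
  have "\<not> eigenvalue A\<^sup>T 1"
    using no1 eigenvalue_root_char_poly[OF A] eigenvalue_root_char_poly[OF At]
    by (simp add: char_poly_transpose_mat[OF A])
  then have "det (char_matrix A\<^sup>T 1) \<noteq> 0"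
    using eigenvalue_det[OF At] by simp
  moreover have "char_matrix A\<^sup>T 1 \<in> carrier_mat n n"
    using At by (simp add: char_matrix_def)
  ultimately obtain y where y: "y \<in> carrier_vec n"
    and sol: "char_matrix A\<^sup>T 1 *\<^sub>v y = vec n (\<lambda>j. - c j)"
    using solvable_if_det_nonzero[of _ n "vec n (\<lambda>j. - c j)"] by auto
  have "y $ j = c j + (\<Sum>i<n. y $ i * A $$ (i, j))" if j: "j < n" for j
  proof -
    have "(char_matrix A\<^sup>T 1 *\<^sub>v y) $ j =
        (\<Sum>i<n. (A $$ (i, j) - (if i = j then 1 else 0)) * y $ i)"
      using A y j by (simp add: char_matrix_def scalar_prod_def lessThan_atLeast0)
    also have "\<dots> = (\<Sum>i<n. y $ i * A $$ (i, j)) - (\<Sum>i<n. if i = j then y $ i else 0)"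
      unfolding sum_subtractf[symmetric] by (intro sum.cong) (auto simp: algebra_simps)
    also have "\<dots> = (\<Sum>i<n. y $ i * A $$ (i, j)) - y $ j"
      using j by simp
    finally show ?thesis
      using arg_cong[OF sol, of "\<lambda>w. w $ j"] j by (simp add: algebra_simps)
  qed
  then show ?thesis
    by blast
qed

lemma exists_transfer_fixed_point:
  assumes "\<not> eigenvalue (component_transfer N M m) 1"
  shows "\<exists>Z. \<forall>c<m. \<forall>d<m. Z c d = R c d + (\<Sum>a<m. \<Sum>b<m. Z a b * transfer_kernel N M a b c d)"
proof -
  obtain z where z: "\<forall>k<m * m. z k = R (k div m) (k mod m) +
      (\<Sum>k'<m * m. z k' * component_transfer N M m $$ (k', k))"
    using exists_row_fixed_point[OF component_transfer_carrier assms,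
        where c = "\<lambda>k. R (k div m) (k mod m)"] by blast
  have "z (c * m + d) = R c d + (\<Sum>a<m. \<Sum>b<m. z (a * m + b) * transfer_kernel N M a b c d)"
    if "c < m" "d < m" for c d
  proof -
    have div_mod: "(c * m + d) div m = c" "(c * m + d) mod m = d"
      using that by simp_all
    have "z (c * m + d) = R c d + (\<Sum>k<m * m. z k * component_transfer N M m $$ (k, c * m + d))"
      using z[rule_format, OF pair_index_less[OF that]] by (simp only: div_mod)
    also have "(\<Sum>k<m * m. z k * component_transfer N M m $$ (k, c * m + d)) =
        (\<Sum>a<m. \<Sum>b<m. z (a * m + b) * component_transfer N M m $$ (a * m + b, c * m + d))"
      by (rule sum_lessThan_mult_pairs)
    also have "\<dots> = (\<Sum>a<m. \<Sum>b<m. z (a * m + b) * transfer_kernel N M a b c d)"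
      using that by (simp add: index_component_transfer)
    finally show ?thesis .
  qed
  then show ?thesis
    by (intro exI[of _ "\<lambda>c d. z (c * m + d)"]) blast
qed

section \<open>Regular block structure\<close>

definition lower_block :: "nat \<Rightarrow> complex mat \<Rightarrow> complex mat" where
  "lower_block n A = mat n n (\<lambda>(i, j). A $$ (Suc i, Suc j))"

lemma lower_block_carrier [simp]: "lower_block n A \<in> carrier_mat n n"
  by (simp add: lower_block_def)

lemma index_lower_block [simp]: "i < n \<Longrightarrow> j < n \<Longrightarrow> lower_block n A $$ (i, j) = A $$ (Suc i, Suc j)"
  by (simp add: lower_block_def)

lemma transfer_apply_Suc_split:
  "transfer_apply N M (Suc n) Y a b = transfer_kernel N M a b 0 0 * Y 0 0
    + (\<Sum>d<n. transfer_kernel N M a b 0 (Suc d) * Y 0 (Suc d))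
    + (\<Sum>c<n. transfer_kernel N M a b (Suc c) 0 * Y (Suc c) 0)
    + (\<Sum>c<n. \<Sum>d<n. transfer_kernel N M a b (Suc c) (Suc d) * Y (Suc c) (Suc d))"
  unfolding transfer_apply_def by (rule sum_pairs_lessThan_Suc)

definition bordered_mat :: "nat \<Rightarrow> (nat \<Rightarrow> complex) \<Rightarrow> (nat \<Rightarrow> nat \<Rightarrow> complex) \<Rightarrow> complex mat" where
  "bordered_mat n x Z = mat (Suc n) (Suc n) (\<lambda>(a, b). case (a, b) of
     (0, 0) \<Rightarrow> 1 | (0, Suc j) \<Rightarrow> x j | (Suc i, 0) \<Rightarrow> cnj (x i) | (Suc i, Suc j) \<Rightarrow> Z i j)"

lemma bordered_mat_carrier [simp]: "bordered_mat n x Z \<in> carrier_mat (Suc n) (Suc n)"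
  by (simp add: bordered_mat_def)

lemma index_bordered_mat [simp]:
  "bordered_mat n x Z $$ (0, 0) = 1"
  "j < n \<Longrightarrow> bordered_mat n x Z $$ (0, Suc j) = x j"
  "i < n \<Longrightarrow> bordered_mat n x Z $$ (Suc i, 0) = cnj (x i)"
  "i < n \<Longrightarrow> j < n \<Longrightarrow> bordered_mat n x Z $$ (Suc i, Suc j) = Z i j"
  by (simp_all add: bordered_mat_def)

(* The components V_alpha of V = [[1, c], [0, A]]; lower_block chi (M alpha) is A_alpha. *)
locale regular_components =
  fixes N chi :: nat and M :: "nat \<Rightarrow> complex mat"
  assumes components_pos: "0 < N"
    and corner_entry: "\<And>\<alpha>. \<alpha> < N \<Longrightarrow> M \<alpha> $$ (0, 0) = (if \<alpha> = 0 then 1 else 0)"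
    and first_column_zero: "\<And>\<alpha> i. \<alpha> < N \<Longrightarrow> i < chi \<Longrightarrow> M \<alpha> $$ (Suc i, 0) = 0"
begin

lemma kernel_Suc_zero_fst: "i < chi \<Longrightarrow> transfer_kernel N M (Suc i) b 0 d = 0"
  by (simp add: transfer_kernel_def first_column_zero)

lemma kernel_Suc_zero_snd: "j < chi \<Longrightarrow> transfer_kernel N M a (Suc j) c 0 = 0"
  by (simp add: transfer_kernel_def first_column_zero)

lemma kernel_zero_zero_fst: "transfer_kernel N M 0 b 0 d = M 0 $$ (b, d)"
proof -
  have "transfer_kernel N M 0 b 0 d = (\<Sum>\<alpha><N. if \<alpha> = 0 then M \<alpha> $$ (b, d) else 0)"
    unfolding transfer_kernel_def by (intro sum.cong) (auto simp: corner_entry)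
  then show ?thesis
    using components_pos by simp
qed

lemma kernel_zero_zero_snd: "transfer_kernel N M a 0 c 0 = cnj (M 0 $$ (a, c))"
proof -
  have "transfer_kernel N M a 0 c 0 = (\<Sum>\<alpha><N. if \<alpha> = 0 then cnj (M \<alpha> $$ (a, c)) else 0)"
    unfolding transfer_kernel_def by (intro sum.cong) (auto simp: corner_entry)
  then show ?thesis
    using components_pos by simp
qed

lemma kernel_Suc_Suc:
  "i < chi \<Longrightarrow> j < chi \<Longrightarrow> c < chi \<Longrightarrow> d < chi \<Longrightarrow>
    transfer_kernel N M (Suc i) (Suc j) (Suc c) (Suc d) =
    transfer_kernel N (\<lambda>\<alpha>. lower_block chi (M \<alpha>)) i j c d"
  by (simp add: transfer_kernel_def)

lemma corner_one: "M 0 $$ (0, 0) = 1"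
  using corner_entry[OF components_pos] by simp

lemmas kernel_simps = kernel_Suc_zero_fst kernel_Suc_zero_snd kernel_zero_zero_fst
  kernel_zero_zero_snd kernel_Suc_Suc corner_one first_column_zero[OF components_pos]

lemma eigenvalue_one: "eigenvalue (component_transfer N M (Suc chi)) 1"
proof -
  define E where "E c d = (if c = 0 \<and> d = 0 then 1 else 0 :: complex)" for c d :: nat
  have "transfer_apply N M (Suc chi) E a b = 1 * E a b" if "a < Suc chi" "b < Suc chi" for a b
  proof -
    have "transfer_apply N M (Suc chi) E a b = transfer_kernel N M a b 0 0"
      unfolding transfer_apply_def sum_pairs_lessThan_Suc by (simp add: E_def)
    also have "\<dots> = E a b"
      using that
      by (cases a; cases b) (auto simp: E_def kernel_simps)
    finally show ?thesis
      by simp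
  qed
  moreover have "E 0 0 \<noteq> 0"
    by (simp add: E_def)
  ultimately show ?thesis
    unfolding eigenvalue_component_transfer_iff by blast
qed

lemma eigenvalue_of_lower_block:
  assumes eigen: "\<And>a b. a < Suc chi \<Longrightarrow> b < Suc chi \<Longrightarrow>
      transfer_apply N M (Suc chi) Y a b = l * Y a b"
    and nonzero: "\<exists>i<chi. \<exists>j<chi. Y (Suc i) (Suc j) \<noteq> 0"
  shows "eigenvalue (component_transfer N (\<lambda>\<alpha>. lower_block chi (M \<alpha>)) chi) l"
proof -
  have "transfer_apply N (\<lambda>\<alpha>. lower_block chi (M \<alpha>)) chi (\<lambda>c d. Y (Suc c) (Suc d)) i j =
      l * Y (Suc i) (Suc j)" if "i < chi" "j < chi" for i j
    using eigen[of "Suc i" "Suc j"] that unfolding transfer_apply_Suc_split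
    by (simp add: transfer_apply_def kernel_simps)
  then show ?thesis
    unfolding eigenvalue_component_transfer_iff
    by (intro exI[of _ "\<lambda>c d. Y (Suc c) (Suc d)"]) (use nonzero in auto)
qed

lemma eigenvalue_of_first_row:
  assumes eigen: "\<And>a b. a < Suc chi \<Longrightarrow> b < Suc chi \<Longrightarrow>
      transfer_apply N M (Suc chi) Y a b = l * Y a b"
    and lower_zero: "\<forall>i<chi. \<forall>j<chi. Y (Suc i) (Suc j) = 0"
    and nonzero: "\<exists>j<chi. Y 0 (Suc j) \<noteq> 0"
  shows "eigenvalue (lower_block chi (M 0)) l"
proof -
  have "(\<Sum>j<chi. lower_block chi (M 0) $$ (i, j) * Y 0 (Suc j)) = l * Y 0 (Suc i)"
    if "i < chi" for i
    using eigen[of 0 "Suc i"] that lower_zero by (simp add: transfer_apply_Suc_split kernel_simps)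
  then show ?thesis
    unfolding eigenvalue_iff_index[OF lower_block_carrier]
    by (intro exI[of _ "\<lambda>j. Y 0 (Suc j)"]) (use nonzero in auto)
qed

lemma eigenvalue_cnj_of_first_column:
  assumes eigen: "\<And>a b. a < Suc chi \<Longrightarrow> b < Suc chi \<Longrightarrow>
      transfer_apply N M (Suc chi) Y a b = l * Y a b"
    and lower_zero: "\<forall>i<chi. \<forall>j<chi. Y (Suc i) (Suc j) = 0"
    and nonzero: "\<exists>i<chi. Y (Suc i) 0 \<noteq> 0"
  shows "eigenvalue (lower_block chi (M 0)) (cnj l)"
proof -
  have "(\<Sum>c<chi. cnj (lower_block chi (M 0) $$ (i, c)) * Y (Suc c) 0) = l * Y (Suc i) 0"
    if "i < chi" for i
    using eigen[of "Suc i" 0] that lower_zero by (simp add: transfer_apply_Suc_split kernel_simps)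
  then have "(\<Sum>c<chi. lower_block chi (M 0) $$ (i, c) * cnj (Y (Suc c) 0)) =
      cnj l * cnj (Y (Suc i) 0)" if "i < chi" for i
    using that by (metis (no_types, lifting) complex_cnj_cnj complex_cnj_mult sum.cong cnj_sum)
  then show ?thesis
    unfolding eigenvalue_iff_index[OF lower_block_carrier]
    by (intro exI[of _ "\<lambda>c. cnj (Y (Suc c) 0)"]) (use nonzero in auto)
qed

lemma eigenvalue_cases:
  assumes "eigenvalue (component_transfer N M (Suc chi)) l"
  shows "l = 1 \<or> eigenvalue (component_transfer N (\<lambda>\<alpha>. lower_block chi (M \<alpha>)) chi) l
    \<or> eigenvalue (lower_block chi (M 0)) l \<or> eigenvalue (lower_block chi (M 0)) (cnj l)"
proof -
  obtain Y where nonzero: "\<exists>a<Suc chi. \<exists>b<Suc chi. Y a b \<noteq> 0"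
    and eigen: "\<forall>a<Suc chi. \<forall>b<Suc chi. transfer_apply N M (Suc chi) Y a b = l * Y a b"
    using assms unfolding eigenvalue_component_transfer_iff by blast
  consider "\<exists>i<chi. \<exists>j<chi. Y (Suc i) (Suc j) \<noteq> 0"
    | "\<forall>i<chi. \<forall>j<chi. Y (Suc i) (Suc j) = 0" "\<exists>j<chi. Y 0 (Suc j) \<noteq> 0"
    | "\<forall>i<chi. \<forall>j<chi. Y (Suc i) (Suc j) = 0" "\<exists>i<chi. Y (Suc i) 0 \<noteq> 0"
    | "\<forall>i<chi. \<forall>j<chi. Y (Suc i) (Suc j) = 0" "\<forall>j<chi. Y 0 (Suc j) = 0" "\<forall>i<chi. Y (Suc i) 0 = 0"
    by blast
  then show ?thesis
  proof cases
    case 1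
    then show ?thesis
      using eigenvalue_of_lower_block eigen by blast
  next
    case 2
    then show ?thesis
      using eigenvalue_of_first_row eigen by blast
  next
    case 3
    then show ?thesis
      using eigenvalue_cnj_of_first_column eigen by blast
  next
    case 4
    then have "Y 0 0 \<noteq> 0"
      using nonzero by (metis less_Suc_eq_0_disj)
    moreover have "Y 0 0 = l * Y 0 0"
      using eigen[rule_format, of 0 0] 4 by (simp add: transfer_apply_Suc_split kernel_simps)
    ultimately show ?thesis
      by simp
  qed
qed

definition border_source :: "(nat \<Rightarrow> complex) \<Rightarrow> nat \<Rightarrow> nat \<Rightarrow> complex" where
  "border_source x i j = transfer_kernel N M 0 0 (Suc i) (Suc j)
    + (\<Sum>b<chi. x b * transfer_kernel N M 0 (Suc b) (Suc i) (Suc j))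
    + (\<Sum>a<chi. cnj (x a) * transfer_kernel N M (Suc a) 0 (Suc i) (Suc j))"

lemma bordered_mat_fixed:
  assumes x: "\<And>j. j < chi \<Longrightarrow>
      x j = M 0 $$ (0, Suc j) + (\<Sum>i<chi. x i * lower_block chi (M 0) $$ (i, j))"
    and Z: "\<And>i j. i < chi \<Longrightarrow> j < chi \<Longrightarrow> Z i j = border_source x i j
      + (\<Sum>a<chi. \<Sum>b<chi. Z a b * transfer_kernel N (\<lambda>\<alpha>. lower_block chi (M \<alpha>)) a b i j)"
  shows "row_times (vec_of (bordered_mat chi x Z)) (component_transfer N M (Suc chi)) =
    vec_of (bordered_mat chi x Z)"
proof -
  let ?X = "\<lambda>a b. bordered_mat chi x Z $$ (a, b)"
  have "(\<Sum>a<Suc chi. \<Sum>b<Suc chi. ?X a b * transfer_kernel N M a b c d) = ?X c d"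
    if "c < Suc chi" "d < Suc chi" for c d
  proof (cases c; cases d)
    assume "c = 0" "d = 0"
    then show ?thesis
      unfolding sum_pairs_lessThan_Suc by (simp add: kernel_simps)
  next
    fix j assume "c = 0" "d = Suc j"
    then show ?thesis
      using that x[of j] unfolding sum_pairs_lessThan_Suc by (simp add: kernel_simps)
  next
    fix i assume "c = Suc i" "d = 0"
    moreover have "cnj (x i) = cnj (M 0 $$ (0, Suc i))
        + (\<Sum>a<chi. cnj (x a) * cnj (M 0 $$ (Suc a, Suc i)))"
      using x[of i] that \<open>c = Suc i\<close> by simp
    ultimately show ?thesis
      using that unfolding sum_pairs_lessThan_Suc by (simp add: kernel_simps)
  next
    fix i j assume "c = Suc i" "d = Suc j"
    then show ?thesis
      using that Z[of i j] unfolding sum_pairs_lessThan_Suc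
      by (simp add: kernel_simps border_source_def)
  qed
  then show ?thesis
    unfolding vec_of_eq_pair_vec[OF bordered_mat_carrier] row_times_pair_vec_component_transfer
      pair_vec_eq_iff by blast
qed

lemma fixed_point_exists:
  assumes "\<not> eigenvalue (lower_block chi (M 0)) 1"
    and "\<not> eigenvalue (component_transfer N (\<lambda>\<alpha>. lower_block chi (M \<alpha>)) chi) 1"
  shows "\<exists>X \<in> carrier_mat (Suc chi) (Suc chi).
    row_times (vec_of X) (component_transfer N M (Suc chi)) = vec_of X
    \<and> X $$ (0, 0) = 1 \<and> (\<forall>j\<in>{1..chi}. X $$ (j, 0) = cnj (X $$ (0, j)))"
proof -
  obtain x where x: "\<forall>j<chi.
      x j = M 0 $$ (0, Suc j) + (\<Sum>i<chi. x i * lower_block chi (M 0) $$ (i, j))"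
    using exists_row_fixed_point[OF lower_block_carrier assms(1), where c = "\<lambda>j. M 0 $$ (0, Suc j)"]
    by blast
  obtain Z where Z: "\<forall>i<chi. \<forall>j<chi. Z i j = border_source x i j +
      (\<Sum>a<chi. \<Sum>b<chi. Z a b * transfer_kernel N (\<lambda>\<alpha>. lower_block chi (M \<alpha>)) a b i j)"
    using exists_transfer_fixed_point[OF assms(2), where R = "border_source x"] by blast
  have "row_times (vec_of (bordered_mat chi x Z)) (component_transfer N M (Suc chi)) =
      vec_of (bordered_mat chi x Z)"
    by (rule bordered_mat_fixed) (use x Z in blast)+
  moreover have "\<forall>j\<in>{1..chi}. bordered_mat chi x Z $$ (j, 0) = cnj (bordered_mat chi x Z $$ (0, j))"
    by (auto simp: bordered_mat_def split: nat.split)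
  ultimately show ?thesis
    by (intro bexI[of _ "bordered_mat chi x Z"] conjI) simp_all
qed

end

lemma hs_inner_zero_right: "A \<in> carrier_mat q q \<Longrightarrow> hs_inner A (0\<^sub>m q q) = 0"
  by (simp add: hs_inner_def mtrace_def mat_adjoint_def)

lemma regular_components_blockV:
  assumes q: "0 < q" and basis: "orthonormal_op_basis q B" and regular: "regular_form q chi W"
  shows "regular_components (q\<^sup>2) chi (comp B (blockV chi W))"
proof
  have B: "\<And>\<alpha>. \<alpha> < q\<^sup>2 \<Longrightarrow> B \<alpha> \<in> carrier_mat q q"
    and orthonormal: "\<And>\<alpha> \<beta>. \<alpha> < q\<^sup>2 \<Longrightarrow> \<beta> < q\<^sup>2 \<Longrightarrow>
      hs_inner (B \<alpha>) (B \<beta>) = (if \<alpha> = \<beta> then 1 else 0)"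
    and B0: "B 0 = 1\<^sub>m q"
    using basis unfolding orthonormal_op_basis_def by auto
  have W: "W $$ (0, 0) = 1\<^sub>m q" "\<And>i. i < chi \<Longrightarrow> W $$ (Suc i, 0) = 0\<^sub>m q q"
    using regular unfolding regular_form_def by auto
  show "0 < q\<^sup>2"
    using q by simp
  fix \<alpha> assume \<alpha>: "\<alpha> < q\<^sup>2"
  show "comp B (blockV chi W) \<alpha> $$ (0, 0) = (if \<alpha> = 0 then 1 else 0)"
    using orthonormal[OF \<alpha>, of 0] q by (simp add: comp_def blockV_def W B0)
  fix i assume "i < chi"
  then show "comp B (blockV chi W) \<alpha> $$ (Suc i, 0) = 0"
    using hs_inner_zero_right[OF B[OF \<alpha>]] by (simp add: comp_def blockV_def W)
qed

lemma comp_blockA_eq_lower_block: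
  "comp B (blockA chi W) = (\<lambda>\<alpha>. lower_block chi (comp B (blockV chi W) \<alpha>))"
  by (auto simp: comp_def blockA_def blockV_def lower_block_def intro!: eq_matI)

lemma transfer_mat_blockV:
  "transfer_mat q B (blockV chi W) = component_transfer (q\<^sup>2) (comp B (blockV chi W)) (Suc chi)"
  by (rule transfer_mat_eq_component_transfer) (simp add: blockV_def)

lemma transfer_mat_blockA:
  "transfer_mat q B (blockA chi W) =
    component_transfer (q\<^sup>2) (\<lambda>\<alpha>. lower_block chi (comp B (blockV chi W) \<alpha>)) chi"
  unfolding comp_blockA_eq_lower_block[symmetric]
  by (rule transfer_mat_eq_component_transfer) (simp add: blockA_def)

theorem proposition1:
  fixes q chi :: nat and B :: "nat \<Rightarrow> complex mat" and W :: "complex mat mat"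
  assumes "0 < q"
    and "orthonormal_op_basis q B"
    and "first_degree q B chi W"
  shows "eigenvalue (transfer_mat q B (blockV chi W)) 1
    \<and> (\<forall>l. eigenvalue (transfer_mat q B (blockV chi W)) l \<and> l \<noteq> 1 \<longrightarrow> cmod l < 1)
    \<and> (\<exists>X \<in> carrier_mat (chi + 1) (chi + 1).
          row_times (vec_of X) (transfer_mat q B (blockV chi W)) = vec_of X
        \<and> X $$ (0, 0) = 1
        \<and> (\<forall>j\<in>{1..chi}. X $$ (j, 0) = cnj (X $$ (0, j))))"
proof -
  let ?V = "comp B (blockV chi W)"
  let ?A = "\<lambda>\<alpha>. lower_block chi (?V \<alpha>)"
  have regular: "regular_form q chi W"
    and small: "\<And>l. eigenvalue (component_transfer (q\<^sup>2) ?A chi) l \<Longrightarrow> cmod l < 1"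
    using assms(3) by (auto simp: first_degree_def transfer_mat_blockA)
  interpret regular_components "q\<^sup>2" chi ?V
    using regular_components_blockV[OF assms(1,2) regular] .
  have A0_small: "cmod \<mu> < 1" if "eigenvalue (?A 0) \<mu>" for \<mu>
    by (rule component_eigenvalue_less_1[where M = ?A and m = chi, OF components_pos _ small that])
      simp
  have no_one: "\<not> eigenvalue (?A 0) 1" "\<not> eigenvalue (component_transfer (q\<^sup>2) ?A chi) 1"
    using A0_small small by fastforce+
  show ?thesis
    unfolding transfer_mat_blockV
  proof (intro conjI allI impI)
    show "eigenvalue (component_transfer (q\<^sup>2) ?V (Suc chi)) 1"
      by (rule eigenvalue_one)
  next
    fix l assume "eigenvalue (component_transfer (q\<^sup>2) ?V (Suc chi)) l \<and> l \<noteq> 1"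
    then show "cmod l < 1"
      using eigenvalue_cases[of l] small[of l] A0_small[of l] A0_small[of "cnj l"] by auto
  next
    show "\<exists>X \<in> carrier_mat (chi + 1) (chi + 1).
        row_times (vec_of X) (component_transfer (q\<^sup>2) ?V (Suc chi)) = vec_of X
        \<and> X $$ (0, 0) = 1 \<and> (\<forall>j\<in>{1..chi}. X $$ (j, 0) = cnj (X $$ (0, j)))"
      using fixed_point_exists[OF no_one] by simp
  qed
qed

end
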